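(* Let $G$ be a connected partial cube and let $E_1,\ldots,E_d$ be its $\Theta$-classes. For $k\in\{1,\ldots,d\}$ let $U$ and $U'$ be the two connected components of $G-E_k$, and for $e,f\in E(G)$ set $\delta_k(e,f)=1$ if ($e\in E(U)$ and $f\in E(U')$) or ($e\in E(U')$ and $f\in E(U)$), and $\delta_k(e,f)=0$ otherwise. Then for all $e,f\in E(G)$, $$\widehat{d}(e,f)=\sum_{k=1}^{d}\delta_k(e,f).$$
   Context: A partial cube is a graph isomorphic to an isometric subgraph of a hypercube $Q_n$ (i.e. distances in the subgraph equal distances in $Q_n$). The Djoković–Winkler relation $\Theta$ on $E(G)$ is defined by: $xy\,\Theta\,uv$ iff $d(x,u)+d(y,v)\neq d(x,v)+d(y,u)$, where $d$ is the shortest-path distance. In a partial cube $\Theta$ is an equivalence relation; its classes are the $\Theta$-classes, and for each $\Theta$-class $E_k$ the graph $G-E_k$ has exactly two connected components. For edges $e=ab$ and $f=xy$, $\widehat{d}(e,f)=\min\{d(a,x),d(a,y),d(b,x),d(b,y)\}$. *)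

theory Defs
  imports Main
begin

definition simple_graph :: "'a set \<Rightarrow> 'a set set \<Rightarrow> bool" where
  "simple_graph V E \<longleftrightarrow> finite V \<and>
     (\<forall>e\<in>E. \<exists>x y. x \<noteq> y \<and> x \<in> V \<and> y \<in> V \<and> e = {x, y})"

definition is_walk :: "'a set \<Rightarrow> 'a set set \<Rightarrow> 'a list \<Rightarrow> bool" where
  "is_walk V E xs \<longleftrightarrow> xs \<noteq> [] \<and> set xs \<subseteq> V \<and>
     (\<forall>i. Suc i < length xs \<longrightarrow> {xs ! i, xs ! Suc i} \<in> E)"

definition reachable :: "'a set \<Rightarrow> 'a set set \<Rightarrow> 'a \<Rightarrow> 'a \<Rightarrow> bool" where
  "reachable V E u v \<longleftrightarrow> (\<exists>xs. is_walk V E xs \<and> hd xs = u \<and> last xs = v)"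

definition connected_graph :: "'a set \<Rightarrow> 'a set set \<Rightarrow> bool" where
  "connected_graph V E \<longleftrightarrow> (\<forall>u\<in>V. \<forall>v\<in>V. reachable V E u v)"

definition gdist :: "'a set \<Rightarrow> 'a set set \<Rightarrow> 'a \<Rightarrow> 'a \<Rightarrow> nat" where
  "gdist V E u v = (LEAST n. \<exists>xs. is_walk V E xs \<and> hd xs = u \<and> last xs = v \<and> length xs = Suc n)"

text \<open>Partial cube: isometric embedding into a hypercube Q_n, whose vertices are the
  subsets of {0..<n} and whose distance is the Hamming distance (size of symmetric difference).\<close>
definition partial_cube :: "'a set \<Rightarrow> 'a set set \<Rightarrow> bool" where
  "partial_cube V E \<longleftrightarrow> simple_graph V E \<and>
     (\<exists>(n::nat) (\<phi>::'a \<Rightarrow> nat set). (\<forall>v\<in>V. \<phi> v \<subseteq> {..<n}) \<and>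
        (\<forall>u\<in>V. \<forall>v\<in>V. gdist V E u v = card ((\<phi> u - \<phi> v) \<union> (\<phi> v - \<phi> u))))"

definition Theta :: "'a set \<Rightarrow> 'a set set \<Rightarrow> 'a set \<Rightarrow> 'a set \<Rightarrow> bool" where
  "Theta V E e f \<longleftrightarrow> (\<exists>x y u v. e = {x, y} \<and> f = {u, v} \<and>
     gdist V E x u + gdist V E y v \<noteq> gdist V E x v + gdist V E y u)"

definition Theta_classes :: "'a set \<Rightarrow> 'a set set \<Rightarrow> 'a set set set" where
  "Theta_classes V E = E // {(e, f). e \<in> E \<and> f \<in> E \<and> Theta V E e f}"

definition components :: "'a set \<Rightarrow> 'a set set \<Rightarrow> 'a set set" where
  "components V E = {{v \<in> V. reachable V E u v} | u. u \<in> V}"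

definition delta :: "'a set \<Rightarrow> 'a set set \<Rightarrow> 'a set set \<Rightarrow> 'a set \<Rightarrow> 'a set \<Rightarrow> nat" where
  "delta V E F e f = (if \<exists>U\<in>components V (E - F). \<exists>U'\<in>components V (E - F).
        U \<noteq> U' \<and> e \<in> E - F \<and> e \<subseteq> U \<and> f \<in> E - F \<and> f \<subseteq> U' then 1 else 0)"

definition edge_dist :: "'a set \<Rightarrow> 'a set set \<Rightarrow> 'a set \<Rightarrow> 'a set \<Rightarrow> nat" where
  "edge_dist V E e f = Min {gdist V E a x | a x. a \<in> e \<and> x \<in> f}"

end

theory Submission
  imports Defs
begin

text \<open>Label the vertices by an isometric embedding \<open>\<phi>\<close> into a hypercube. Then every edge flips
  exactly one coordinate, and a four-point count of Hamming distances shows that two edges are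
  in relation \<open>\<Theta>\<close> iff they flip the same coordinate, so the \<open>\<Theta>\<close>-classes are indexed by the
  coordinates in use. Deleting the class of coordinate \<open>i\<close> leaves exactly the two halfspaces
  \<open>i \<in> \<phi> v\<close> and \<open>i \<notin> \<phi> v\<close> as components (walk along a geodesic, which only flips coordinates
  in which its ends differ), so \<open>\<delta>\<^sub>i(e, f) = 1\<close> iff \<open>i\<close> separates all endpoints of \<open>e\<close> from all
  endpoints of \<open>f\<close>. For any endpoints \<open>a \<in> e\<close>, \<open>x \<in> f\<close> these separating coordinates are
  \<open>sym_diff (\<phi> a) (\<phi> x)\<close> minus the two coordinates of \<open>e\<close> and \<open>f\<close>, and choosing endpoints that agree in
  those two coordinates shows that their number is the minimum distance between the edges.\<close>

section \<open>Walks and distances\<close>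

lemma is_walk_Cons_Cons:
  "is_walk V E (x # y # ys) \<longleftrightarrow> x \<in> V \<and> {x, y} \<in> E \<and> is_walk V E (y # ys)"
  unfolding is_walk_def by (auto simp: All_less_Suc2)

definition adjacent :: "'a set \<Rightarrow> 'a set set \<Rightarrow> 'a \<Rightarrow> 'a \<Rightarrow> bool" where
  "adjacent V E x y \<longleftrightarrow> x \<in> V \<and> y \<in> V \<and> {x, y} \<in> E"

lemma is_walk_rtranclp_adjacent: "is_walk V E xs \<Longrightarrow> (adjacent V E)\<^sup>*\<^sup>* (hd xs) (last xs)"
proof (induction xs rule: induct_list012)
  case (3 x y ys)
  then have "adjacent V E x y" "is_walk V E (y # ys)"
    by (auto simp: is_walk_Cons_Cons adjacent_def is_walk_def)
  with "3.IH" show ?case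
    by (auto intro: converse_rtranclp_into_rtranclp)
qed (simp_all add: is_walk_def)

lemma rtranclp_adjacent_is_walk:
  assumes "(adjacent V E)\<^sup>*\<^sup>* u v" "u \<in> V"
  shows "\<exists>xs. is_walk V E xs \<and> hd xs = u \<and> last xs = v"
  using assms
proof (induction rule: converse_rtranclp_induct)
  case base
  then show ?case by (intro exI[of _ "[v]"]) (simp add: is_walk_def)
next
  case (step u w)
  then obtain xs where xs: "is_walk V E xs" "hd xs = w" "last xs = v"
    by (auto simp: adjacent_def)
  then obtain ys where "xs = w # ys"
    by (cases xs) (auto simp: is_walk_def)
  with xs step.hyps(1) show ?case
    by (intro exI[of _ "u # xs"]) (auto simp: is_walk_Cons_Cons adjacent_def)
qed

lemma reachable_iff_rtranclp_adjacent:
  "reachable V E u v \<longleftrightarrow> u \<in> V \<and> (adjacent V E)\<^sup>*\<^sup>* u v"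
proof
  assume "reachable V E u v"
  then obtain xs where xs: "is_walk V E xs" "hd xs = u" "last xs = v"
    by (auto simp: reachable_def)
  then have "u \<in> V"
    by (cases xs) (auto simp: is_walk_def)
  with xs show "u \<in> V \<and> (adjacent V E)\<^sup>*\<^sup>* u v"
    using is_walk_rtranclp_adjacent by blast
qed (auto simp: reachable_def dest: rtranclp_adjacent_is_walk)

lemma gdist_less_length:
  assumes "is_walk V E xs" "hd xs = u" "last xs = v"
  shows "gdist V E u v < length xs"
proof -
  have "length xs = Suc (length xs - 1)"
    using assms(1) by (cases xs) (auto simp: is_walk_def)
  then have "gdist V E u v \<le> length xs - 1"
    unfolding gdist_def using assms by (intro Least_le) metis
  then show ?thesis
    using \<open>length xs = Suc (length xs - 1)\<close> by linarith
qed

lemma shortest_walk_exists: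
  assumes "reachable V E u v"
  obtains xs where "is_walk V E xs" "hd xs = u" "last xs = v" "length xs = Suc (gdist V E u v)"
proof -
  obtain xs where xs: "is_walk V E xs" "hd xs = u" "last xs = v"
    using assms by (auto simp: reachable_def)
  then have "length xs = Suc (length xs - 1)"
    by (cases xs) (auto simp: is_walk_def)
  with xs have "\<exists>ys. is_walk V E ys \<and> hd ys = u \<and> last ys = v \<and> length ys = Suc (length xs - 1)"
    by blast
  then have "\<exists>ys. is_walk V E ys \<and> hd ys = u \<and> last ys = v \<and> length ys = Suc (gdist V E u v)"
    unfolding gdist_def by (rule LeastI)
  with that show ?thesis
    by blast
qed

lemma gdist_edge:
  assumes "{x, y} \<in> E" "x \<noteq> y" "x \<in> V" "y \<in> V"
  shows "gdist V E x y = 1"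
proof -
  have walk: "is_walk V E [x, y]"
    using assms by (simp add: is_walk_Cons_Cons is_walk_def)
  then have "reachable V E x y"
    unfolding reachable_def by (intro exI[of _ "[x, y]"]) simp
  then obtain xs where xs: "hd xs = x" "last xs = y" "length xs = Suc (gdist V E x y)"
    by (rule shortest_walk_exists)
  have "gdist V E x y \<noteq> 0"
  proof
    assume "gdist V E x y = 0"
    with xs have "xs = [x]"
      by (cases xs) auto
    with xs assms(2) show False
      by simp
  qed
  moreover have "gdist V E x y < 2"
    using walk gdist_less_length by fastforce
  ultimately show ?thesis
    by linarith
qed

lemma exists_adjacent_closer:
  assumes "reachable V E u v" "u \<noteq> v"
  obtains w where "adjacent V E u w" "gdist V E w v < gdist V E u v"
proof -
  obtain xs where xs: "is_walk V E xs" "hd xs = u" "last xs = v" "length xs = Suc (gdist V E u v)"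
    using assms(1) by (rule shortest_walk_exists)
  then obtain w ws where xs_eq: "xs = u # w # ws"
    using assms(2) by (cases xs rule: remdups_adj.cases) auto
  with xs have "u \<in> V" "{u, w} \<in> E" and walk: "is_walk V E (w # ws)"
    by (simp_all add: is_walk_Cons_Cons)
  then have "adjacent V E u w"
    by (auto simp: adjacent_def is_walk_def)
  moreover have "gdist V E w v < length (w # ws)"
    using walk xs xs_eq by (intro gdist_less_length) auto
  ultimately show ?thesis
    using that xs(4) xs_eq by simp
qed

section \<open>Hamming distance\<close>

lemma card_sym_diff_singleton:
  assumes "finite D"
  shows "int (card (sym_diff D {t})) = int (card D) + (if t \<in> D then -1 else 1)"
proof (cases "t \<in> D")
  case True
  then have "sym_diff D {t} = D - {t}" by auto
  moreover have "card D > 0"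
    using True assms card_gt_0_iff by blast
  ultimately show ?thesis
    using True assms by simp
next
  case False
  then have "sym_diff D {t} = insert t D" by auto
  with False assms show ?thesis by simp
qed

lemma hamming_four_point_iff:
  fixes P R :: "'a set"
  assumes "finite P" "finite R"
  shows "card (sym_diff P R) + card (sym_diff (sym_diff P {j}) (sym_diff R {k}))
           = card (sym_diff P (sym_diff R {k})) + card (sym_diff (sym_diff P {j}) R)
         \<longleftrightarrow> j \<noteq> k"
proof -
  define D where "D = sym_diff P R"
  have "finite D" "finite (sym_diff D {j})"
    using assms by (simp_all add: D_def)
  have D_eqs: "sym_diff P R = D" "sym_diff P (sym_diff R {k}) = sym_diff D {k}"
    "sym_diff (sym_diff P {j}) R = sym_diff D {j}"
    "sym_diff (sym_diff P {j}) (sym_diff R {k}) = sym_diff (sym_diff D {j}) {k}"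
    by (auto simp: D_def)
  show ?thesis
    unfolding D_eqs
  proof (cases "j = k")
    case True
    then have "sym_diff (sym_diff D {j}) {k} = D"
      by auto
    moreover have "int (card (sym_diff D {j})) \<noteq> int (card D)"
      using card_sym_diff_singleton[OF \<open>finite D\<close>, of j] by simp
    ultimately show "card D + card (sym_diff (sym_diff D {j}) {k})
        = card (sym_diff D {k}) + card (sym_diff D {j}) \<longleftrightarrow> j \<noteq> k"
      using True by simp
  next
    case False
    then have "k \<in> sym_diff D {j} \<longleftrightarrow> k \<in> D"
      by auto
    then have "int (card D) + int (card (sym_diff (sym_diff D {j}) {k}))
        = int (card (sym_diff D {k})) + int (card (sym_diff D {j}))"
      using card_sym_diff_singleton[OF \<open>finite D\<close>, of j] card_sym_diff_singleton[OF \<open>finite D\<close>, of k]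
        card_sym_diff_singleton[OF \<open>finite (sym_diff D {j})\<close>, of k]
      by simp
    with False show "card D + card (sym_diff (sym_diff D {j}) {k})
        = card (sym_diff D {k}) + card (sym_diff D {j}) \<longleftrightarrow> j \<noteq> k"
      by linarith
  qed
qed

section \<open>Isometric embeddings into hypercubes\<close>

locale cube_embedding =
  fixes V :: "'a set" and E :: "'a set set" and \<phi> :: "'a \<Rightarrow> nat set"
  assumes simple: "simple_graph V E"
    and connected: "connected_graph V E"
    and gdist_eq_card: "\<And>u v. u \<in> V \<Longrightarrow> v \<in> V \<Longrightarrow> gdist V E u v = card (sym_diff (\<phi> u) (\<phi> v))"
    and finite_label: "\<And>v. v \<in> V \<Longrightarrow> finite (\<phi> v)"
begin

text \<open>For an edge this is the unique coordinate flipped along it (see \<open>sym_diff_edge\<close>).\<close>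

definition edge_coord :: "'a set \<Rightarrow> nat" where
  "edge_coord e = the_elem (\<Union>(\<phi> ` e) - \<Inter>(\<phi> ` e))"

lemma edgeE:
  assumes "e \<in> E"
  obtains x y where "x \<noteq> y" "x \<in> V" "y \<in> V" "e = {x, y}"
  using assms simple by (auto simp: simple_graph_def)

lemma edge_nonempty: "e \<in> E \<Longrightarrow> e \<noteq> {}"
  by (auto elim: edgeE)

lemma edge_subset: "e \<in> E \<Longrightarrow> e \<subseteq> V"
  by (auto elim: edgeE)

lemma finite_edges: "finite E"
proof -
  have "E \<subseteq> Pow V"
    using edge_subset by blast
  then show ?thesis
    using simple finite_subset by (auto simp: simple_graph_def)
qed

lemma sym_diff_edge:
  assumes "{x, y} \<in> E" "x \<noteq> y"
  shows "sym_diff (\<phi> x) (\<phi> y) = {edge_coord {x, y}}"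
proof -
  have "x \<in> V" "y \<in> V"
    using edge_subset assms(1) by auto
  then have "card (sym_diff (\<phi> x) (\<phi> y)) = 1"
    using assms gdist_edge gdist_eq_card by metis
  then obtain j where j: "sym_diff (\<phi> x) (\<phi> y) = {j}"
    by (rule card_1_singletonE)
  have "\<Union>(\<phi> ` {x, y}) - \<Inter>(\<phi> ` {x, y}) = sym_diff (\<phi> x) (\<phi> y)"
    by auto
  with j show ?thesis
    by (simp add: edge_coord_def)
qed

lemma sym_diff_in_edge:
  assumes "e \<in> E" "a \<in> e" "b \<in> e"
  shows "sym_diff (\<phi> a) (\<phi> b) = (if a = b then {} else {edge_coord e})"
proof (cases "a = b")
  case False
  with assms have "e = {a, b}"
    by (auto elim!: edgeE)
  with assms(1) False show ?thesis
    using sym_diff_edge by simp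
qed simp

lemma edge_endpoint_with_bit:
  assumes "e \<in> E"
  obtains a where "a \<in> e" "edge_coord e \<in> \<phi> a \<longleftrightarrow> P"
proof -
  obtain x y where "x \<noteq> y" "e = {x, y}"
    using assms by (rule edgeE)
  then have "edge_coord e \<in> sym_diff (\<phi> x) (\<phi> y)"
    using assms sym_diff_in_edge[of e x y] by simp
  then have "(edge_coord e \<in> \<phi> x \<longleftrightarrow> P) \<or> (edge_coord e \<in> \<phi> y \<longleftrightarrow> P)"
    by blast
  with \<open>e = {x, y}\<close> that show ?thesis
    by blast
qed

lemma same_bit_on_edge_iff:
  assumes "e \<in> E"
  shows "(\<forall>a\<in>e. \<forall>b\<in>e. i \<in> \<phi> a \<longleftrightarrow> i \<in> \<phi> b) \<longleftrightarrow> edge_coord e \<noteq> i"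
proof -
  obtain x y where "x \<noteq> y" "e = {x, y}"
    using assms by (rule edgeE)
  then have "sym_diff (\<phi> x) (\<phi> y) = {edge_coord e}"
    using assms sym_diff_in_edge[of e x y] by simp
  then have "i \<in> sym_diff (\<phi> x) (\<phi> y) \<longleftrightarrow> edge_coord e = i"
    by auto
  then have "(i \<in> \<phi> x \<longleftrightarrow> i \<in> \<phi> y) \<longleftrightarrow> edge_coord e \<noteq> i"
    by blast
  with \<open>e = {x, y}\<close> show ?thesis
    by auto
qed

lemma Theta_condition_iff_edge_coord_eq:
  assumes "e \<in> E" "f \<in> E" "e = {x, y}" "f = {u, v}"
  shows "gdist V E x u + gdist V E y v \<noteq> gdist V E x v + gdist V E y u
    \<longleftrightarrow> edge_coord e = edge_coord f"
proof -
  have "x \<noteq> y" "u \<noteq> v"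
    using assms by (auto elim!: edgeE)
  have in_V: "x \<in> V" "y \<in> V" "u \<in> V" "v \<in> V"
    using assms edge_subset by auto
  have "sym_diff (\<phi> x) (\<phi> y) = {edge_coord e}" "sym_diff (\<phi> u) (\<phi> v) = {edge_coord f}"
    using assms \<open>x \<noteq> y\<close> \<open>u \<noteq> v\<close> sym_diff_in_edge by auto
  then have "\<phi> y = sym_diff (\<phi> x) {edge_coord e}" "\<phi> v = sym_diff (\<phi> u) {edge_coord f}"
    by blast+
  then show ?thesis
    using hamming_four_point_iff[of "\<phi> x" "\<phi> u" "edge_coord e" "edge_coord f"]
    by (simp add: gdist_eq_card in_V finite_label)
qed

lemma Theta_iff_edge_coord_eq:
  assumes "e \<in> E" "f \<in> E"
  shows "Theta V E e f \<longleftrightarrow> edge_coord e = edge_coord f"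
proof -
  obtain x y u v where "e = {x, y}" "f = {u, v}"
    using assms by (metis edgeE)
  then show ?thesis
    unfolding Theta_def using assms Theta_condition_iff_edge_coord_eq by metis
qed

definition coord_class :: "nat \<Rightarrow> 'a set set" where
  "coord_class i = {g \<in> E. edge_coord g = i}"

lemma Theta_classes_eq: "Theta_classes V E = coord_class ` edge_coord ` E"
proof -
  let ?R = "{(e, f). e \<in> E \<and> f \<in> E \<and> Theta V E e f}"
  have "?R `` {e} = coord_class (edge_coord e)" if "e \<in> E" for e
    using that Theta_iff_edge_coord_eq by (auto simp: coord_class_def)
  then show ?thesis
    unfolding Theta_classes_def quotient_def by (auto simp: image_image)
qed

lemma inj_on_coord_class: "inj_on coord_class (edge_coord ` E)"
  by (rule inj_onI) (auto simp: coord_class_def)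

definition halfspace :: "nat \<Rightarrow> 'a \<Rightarrow> 'a set" where
  "halfspace i u = {v \<in> V. i \<in> \<phi> v \<longleftrightarrow> i \<in> \<phi> u}"

lemma bit_invariant_off_coord_class:
  "(adjacent V (E - coord_class i))\<^sup>*\<^sup>* u v \<Longrightarrow> i \<in> \<phi> u \<longleftrightarrow> i \<in> \<phi> v"
proof (induction rule: rtranclp_induct)
  case (step y z)
  then have "{y, z} \<in> E" "edge_coord {y, z} \<noteq> i"
    by (auto simp: adjacent_def coord_class_def)
  then have "i \<in> \<phi> y \<longleftrightarrow> i \<in> \<phi> z"
    using same_bit_on_edge_iff by blast
  with step.IH show ?case
    by simp
qed simp

lemma rtranclp_off_coord_class_if_same_bit:
  "u \<in> V \<Longrightarrow> v \<in> V \<Longrightarrow> (i \<in> \<phi> u \<longleftrightarrow> i \<in> \<phi> v) \<Longrightarrow> (adjacent V (E - coord_class i))\<^sup>*\<^sup>* u v"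
proof (induction "gdist V E u v" arbitrary: u rule: less_induct)
  case less
  show ?case
  proof (cases "u = v")
    case False
    have "reachable V E u v"
      using connected less.prems by (simp add: connected_graph_def)
    then obtain w where w: "adjacent V E u w" "gdist V E w v < gdist V E u v"
      using False by (rule exists_adjacent_closer)
    then have "{u, w} \<in> E" "w \<in> V" "u \<noteq> w"
      by (auto simp: adjacent_def)
    define j where "j = edge_coord {u, w}"
    have "sym_diff (\<phi> u) (\<phi> w) = {j}"
      unfolding j_def using \<open>{u, w} \<in> E\<close> \<open>u \<noteq> w\<close> by (rule sym_diff_edge)
    then have step: "sym_diff (\<phi> w) (\<phi> v) = sym_diff (sym_diff (\<phi> u) (\<phi> v)) {j}"
      by blast
    \<comment> \<open>a step towards v along a geodesic flips a coordinate in which u and v differ\<close>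
    have "j \<in> sym_diff (\<phi> u) (\<phi> v)"
      using w(2) card_sym_diff_singleton[of "sym_diff (\<phi> u) (\<phi> v)" j]
      by (simp add: step gdist_eq_card less.prems \<open>w \<in> V\<close> finite_label split: if_splits)
    with less.prems(3) have "j \<noteq> i"
      by blast
    with \<open>sym_diff (\<phi> u) (\<phi> w) = {j}\<close> have "i \<notin> sym_diff (\<phi> u) (\<phi> w)"
      by simp
    with less.prems(3) have "i \<in> \<phi> w \<longleftrightarrow> i \<in> \<phi> v"
      by blast
    with less.hyps w(2) \<open>w \<in> V\<close> less.prems(2) have "(adjacent V (E - coord_class i))\<^sup>*\<^sup>* w v"
      by blast
    moreover have "adjacent V (E - coord_class i) u w"
      using w(1) \<open>j \<noteq> i\<close> by (auto simp: adjacent_def coord_class_def j_def)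
    ultimately show ?thesis
      by (metis converse_rtranclp_into_rtranclp)
  qed simp
qed

lemma components_minus_coord_class: "components V (E - coord_class i) = halfspace i ` V"
proof -
  have "{v \<in> V. reachable V (E - coord_class i) u v} = halfspace i u" if "u \<in> V" for u
    using that bit_invariant_off_coord_class[of i u] rtranclp_off_coord_class_if_same_bit[of u _ i]
    unfolding halfspace_def reachable_iff_rtranclp_adjacent by blast
  then show ?thesis
    unfolding components_def by auto
qed

definition separating_coords :: "'a set \<Rightarrow> 'a set \<Rightarrow> nat set" where
  "separating_coords e f = {i. \<forall>a\<in>e. \<forall>x\<in>f. i \<in> sym_diff (\<phi> a) (\<phi> x)}"

lemma separating_coords_eq:
  assumes "e \<in> E" "f \<in> E" "a \<in> e" "x \<in> f"
  shows "separating_coords e f = sym_diff (\<phi> a) (\<phi> x) - {edge_coord e, edge_coord f}"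
proof
  show "separating_coords e f \<subseteq> sym_diff (\<phi> a) (\<phi> x) - {edge_coord e, edge_coord f}"
  proof
    fix i assume i: "i \<in> separating_coords e f"
    obtain a' where "a' \<in> e" "edge_coord e \<in> \<phi> a' \<longleftrightarrow> edge_coord e \<in> \<phi> x"
      using assms(1) by (rule edge_endpoint_with_bit)
    moreover obtain x' where "x' \<in> f" "edge_coord f \<in> \<phi> x' \<longleftrightarrow> edge_coord f \<in> \<phi> a"
      using assms(2) by (rule edge_endpoint_with_bit)
    ultimately show "i \<in> sym_diff (\<phi> a) (\<phi> x) - {edge_coord e, edge_coord f}"
      using i assms(3,4) unfolding separating_coords_def by blast
  qed
next
  show "sym_diff (\<phi> a) (\<phi> x) - {edge_coord e, edge_coord f} \<subseteq> separating_coords e f"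
  proof
    fix i assume i: "i \<in> sym_diff (\<phi> a) (\<phi> x) - {edge_coord e, edge_coord f}"
    have "i \<in> sym_diff (\<phi> a') (\<phi> x')" if "a' \<in> e" "x' \<in> f" for a' x'
    proof -
      have "i \<notin> sym_diff (\<phi> a) (\<phi> a')" "i \<notin> sym_diff (\<phi> x) (\<phi> x')"
        using i that assms sym_diff_in_edge by auto
      with i show ?thesis
        by blast
    qed
    then show "i \<in> separating_coords e f"
      unfolding separating_coords_def by blast
  qed
qed

lemma endpoints_realising_separating_coords:
  assumes "e \<in> E" "f \<in> E"
  obtains a x where "a \<in> e" "x \<in> f" "sym_diff (\<phi> a) (\<phi> x) = separating_coords e f"
proof -
  obtain a0 where "a0 \<in> e"
    using edge_nonempty[OF assms(1)] by blast
  obtain x where x: "x \<in> f" "edge_coord f \<in> \<phi> x \<longleftrightarrow> edge_coord f \<in> \<phi> a0"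
    using assms(2) by (rule edge_endpoint_with_bit)
  obtain a where a: "a \<in> e" "edge_coord e \<in> \<phi> a \<longleftrightarrow> edge_coord e \<in> \<phi> x"
    using assms(1) by (rule edge_endpoint_with_bit)
  have "edge_coord f \<notin> sym_diff (\<phi> a) (\<phi> x)"
  proof (cases "edge_coord f = edge_coord e")
    case False
    then have "edge_coord f \<notin> sym_diff (\<phi> a) (\<phi> a0)"
      using assms(1) a(1) \<open>a0 \<in> e\<close> sym_diff_in_edge by auto
    with x(2) show ?thesis
      by blast
  qed (use a(2) in auto)
  with a(2) have "sym_diff (\<phi> a) (\<phi> x) = sym_diff (\<phi> a) (\<phi> x) - {edge_coord e, edge_coord f}"
    by blast
  with a(1) x(1) assms show ?thesis
    using that separating_coords_eq by metis
qed

lemma edge_dist_eq_card_separating_coords: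
  assumes "e \<in> E" "f \<in> E"
  shows "edge_dist V E e f = card (separating_coords e f)"
  unfolding edge_dist_def
proof (rule Min_eqI)
  have "finite e" "finite f"
    using assms edge_subset simple finite_subset by (auto simp: simple_graph_def)
  then show "finite {gdist V E a x |a x. a \<in> e \<and> x \<in> f}"
    using finite_image_set2[of "\<lambda>a. a \<in> e" "\<lambda>x. x \<in> f" "gdist V E"] by simp
next
  fix d assume "d \<in> {gdist V E a x |a x. a \<in> e \<and> x \<in> f}"
  then obtain a x where ax: "a \<in> e" "x \<in> f" "d = gdist V E a x"
    by blast
  then have "a \<in> V" "x \<in> V"
    using assms edge_subset by auto
  have "separating_coords e f \<subseteq> sym_diff (\<phi> a) (\<phi> x)"
    using separating_coords_eq[OF assms ax(1,2)] by blast
  then have "card (separating_coords e f) \<le> card (sym_diff (\<phi> a) (\<phi> x))"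
    using finite_label \<open>a \<in> V\<close> \<open>x \<in> V\<close> by (simp add: card_mono)
  with ax(3) show "card (separating_coords e f) \<le> d"
    using gdist_eq_card \<open>a \<in> V\<close> \<open>x \<in> V\<close> by simp
next
  obtain a x where ax: "a \<in> e" "x \<in> f" "sym_diff (\<phi> a) (\<phi> x) = separating_coords e f"
    using assms by (rule endpoints_realising_separating_coords)
  moreover have "a \<in> V" "x \<in> V"
    using ax assms edge_subset by auto
  ultimately have "gdist V E a x = card (separating_coords e f)"
    by (simp add: gdist_eq_card)
  with ax show "card (separating_coords e f) \<in> {gdist V E a x |a x. a \<in> e \<and> x \<in> f}"
    by (intro CollectI exI[of _ a] exI[of _ x]) simp
qed

lemma separating_coords_subset:
  assumes "e \<in> E" "f \<in> E"
  shows "separating_coords e f \<subseteq> edge_coord ` E"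
proof
  fix i assume i: "i \<in> separating_coords e f"
  obtain a x where "a \<in> e" "x \<in> f"
    using assms edge_nonempty by blast
  moreover from this have "i \<in> sym_diff (\<phi> a) (\<phi> x)"
    using i unfolding separating_coords_def by blast
  moreover have "reachable V E a x"
    using connected assms edge_subset \<open>a \<in> e\<close> \<open>x \<in> f\<close> by (auto simp: connected_graph_def)
  ultimately have "coord_class i \<noteq> {}"
    using bit_invariant_off_coord_class[of i a x] by (auto simp: reachable_iff_rtranclp_adjacent)
  then show "i \<in> edge_coord ` E"
    by (auto simp: coord_class_def)
qed

lemma delta_coord_class:
  assumes "e \<in> E" "f \<in> E"
  shows "delta V E (coord_class i) e f = (if i \<in> separating_coords e f then 1 else 0)"
proof -
  have "(\<exists>u\<in>V. \<exists>u'\<in>V. halfspace i u \<noteq> halfspace i u' \<and> e \<in> E - coord_class i \<and> e \<subseteq> halfspace i u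
      \<and> f \<in> E - coord_class i \<and> f \<subseteq> halfspace i u') \<longleftrightarrow> i \<in> separating_coords e f"
  proof
    assume "\<exists>u\<in>V. \<exists>u'\<in>V. halfspace i u \<noteq> halfspace i u' \<and> e \<in> E - coord_class i \<and> e \<subseteq> halfspace i u
      \<and> f \<in> E - coord_class i \<and> f \<subseteq> halfspace i u'"
    then obtain u u' where "halfspace i u \<noteq> halfspace i u'" "e \<subseteq> halfspace i u" "f \<subseteq> halfspace i u'"
      by blast
    have "halfspace i u = halfspace i u'" if "i \<in> \<phi> u \<longleftrightarrow> i \<in> \<phi> u'"
      using that unfolding halfspace_def by simp
    with \<open>halfspace i u \<noteq> halfspace i u'\<close> have "i \<in> \<phi> u \<longleftrightarrow> i \<notin> \<phi> u'"
      by blast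
    moreover have "i \<in> \<phi> a \<longleftrightarrow> i \<in> \<phi> u" if "a \<in> e" for a
      using that \<open>e \<subseteq> halfspace i u\<close> unfolding halfspace_def by blast
    moreover have "i \<in> \<phi> x \<longleftrightarrow> i \<in> \<phi> u'" if "x \<in> f" for x
      using that \<open>f \<subseteq> halfspace i u'\<close> unfolding halfspace_def by blast
    ultimately show "i \<in> separating_coords e f"
      unfolding separating_coords_def by simp
  next
    assume i: "i \<in> separating_coords e f"
    obtain a x where "a \<in> e" "x \<in> f"
      using assms edge_nonempty by blast
    have opposite: "i \<in> \<phi> a' \<longleftrightarrow> i \<notin> \<phi> x'" if "a' \<in> e" "x' \<in> f" for a' x'
      using i that unfolding separating_coords_def by blast
    have same_e: "\<forall>a'\<in>e. \<forall>b\<in>e. i \<in> \<phi> a' \<longleftrightarrow> i \<in> \<phi> b"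
      using opposite \<open>x \<in> f\<close> by blast
    have same_f: "\<forall>x'\<in>f. \<forall>y\<in>f. i \<in> \<phi> x' \<longleftrightarrow> i \<in> \<phi> y"
      using opposite \<open>a \<in> e\<close> by blast
    have "e \<subseteq> halfspace i a" "f \<subseteq> halfspace i x"
      using same_e same_f \<open>a \<in> e\<close> \<open>x \<in> f\<close> edge_subset[OF assms(1)] edge_subset[OF assms(2)]
      unfolding halfspace_def by blast+
    moreover have "halfspace i a \<noteq> halfspace i x"
      using opposite[OF \<open>a \<in> e\<close> \<open>x \<in> f\<close>] \<open>e \<subseteq> halfspace i a\<close> \<open>a \<in> e\<close>
      unfolding halfspace_def by blast
    moreover have "a \<in> V" "x \<in> V"
      using \<open>a \<in> e\<close> \<open>x \<in> f\<close> assms edge_subset by auto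
    moreover have "edge_coord e \<noteq> i" "edge_coord f \<noteq> i"
      using same_bit_on_edge_iff assms same_e same_f by blast+
    then have "e \<in> E - coord_class i \<and> f \<in> E - coord_class i"
      using assms by (simp add: coord_class_def)
    ultimately show "\<exists>u\<in>V. \<exists>u'\<in>V. halfspace i u \<noteq> halfspace i u' \<and> e \<in> E - coord_class i
      \<and> e \<subseteq> halfspace i u \<and> f \<in> E - coord_class i \<and> f \<subseteq> halfspace i u'"
      by (intro bexI[of _ a] bexI[of _ x] conjI) simp_all
  qed
  then show ?thesis
    unfolding delta_def components_minus_coord_class by simp
qed

lemma edge_dist_eq_sum_delta:
  assumes "e \<in> E" "f \<in> E"
  shows "edge_dist V E e f = (\<Sum>F\<in>Theta_classes V E. delta V E F e f)"
proof -
  have "(\<Sum>F\<in>Theta_classes V E. delta V E F e f) = (\<Sum>i\<in>edge_coord ` E. delta V E (coord_class i) e f)"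
    unfolding Theta_classes_eq by (rule sum.reindex[OF inj_on_coord_class, unfolded comp_def])
  also have "\<dots> = card (edge_coord ` E \<inter> separating_coords e f)"
    using finite_edges by (simp add: delta_coord_class assms sum.If_cases)
  also have "\<dots> = card (separating_coords e f)"
    using separating_coords_subset[OF assms] by (simp add: Int_absorb1)
  finally show ?thesis
    using edge_dist_eq_card_separating_coords[OF assms] by simp
qed

end

theorem lemma3p2:
  fixes V :: "'a set" and E :: "'a set set"
  assumes "partial_cube V E" and "connected_graph V E"
    and "e \<in> E" and "f \<in> E"
  shows "edge_dist V E e f = (\<Sum>F\<in>Theta_classes V E. delta V E F e f)"
proof -
  obtain n :: nat and \<phi> :: "'a \<Rightarrow> nat set"
    where "simple_graph V E" "\<forall>v\<in>V. \<phi> v \<subseteq> {..<n}"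
      and "\<forall>u\<in>V. \<forall>v\<in>V. gdist V E u v = card (sym_diff (\<phi> u) (\<phi> v))"
    using assms(1) unfolding partial_cube_def by blast
  then interpret cube_embedding V E \<phi>
    using assms(2) by unfold_locales (auto intro: finite_subset)
  show ?thesis
    using assms(3,4) by (rule edge_dist_eq_sum_delta)
qed

end
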